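(* Assume the hypotheses of the concentration setting: $\rho>0$ and there exist $t_0>0$, $C_2<\infty$ such that $t\mapsto\rho(t)$ (with $\rho(0):=\rho$) is differentiable on $[0,t_0]$ with $|\rho'(t)|\le C_2$. Let $\alpha\in(0,1)$ and let $b=b_n$ be integers with $1\le b_n\le n$, $b_n\to\infty$ and $b_n\log n/n\to0$. Let $\mathcal{S}^1_{b,n},\dots,\mathcal{S}^N_{b,n}$, $N=\binom{n}{b}$, be all subsets of size $b$ of the sample $\mathcal{S}_n=\{X_1,\dots,X_n\}$ (i.i.d. from $P$), define $$L_b(t)=\frac1N\sum_{j=1}^N I\big(H(\mathcal{S}^j_{b,n},\mathcal{S}_n)>t\big),\qquad t>0,$$ and $c_b=2\inf\{t>0: L_b(t)\le\alpha\}$. Then $$\mathbb{P}\big(H(\mathcal{S}_n,\mathbb{M})>c_b\big)\le\alpha+O\Big(\big(\tfrac{b}{n}\big)^{1/4}\Big)\quad\text{as }n\to\infty.$$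
   Context: $\mathbb{M}\subset\mathbb{R}^D$ is a compact $d$-dimensional smooth submanifold with positive reach and $P$ is a probability distribution with support $\mathbb{M}$. $B(x,r)$ is the closed Euclidean ball of radius $r$ about $x$. $H(A,B)=\max\{\sup_{a\in A}\inf_{b\in B}\|a-b\|,\sup_{b\in B}\inf_{a\in A}\|a-b\|\}$ is the Hausdorff distance. For $x\in\mathbb{M}$, $t>0$: $\rho(x,t)=P(B(x,t/2))/t^d$, $\rho(t)=\inf_{x\in\mathbb{M}}\rho(x,t)$, $\rho=\lim_{t\downarrow0}\rho(t)$ (assumed to exist). $I(\cdot)$ is the indicator function. *)

theory Defs
  imports "HOL-Analysis.Analysis" "HOL-Probability.Probability"
begin

definition hausdorff_dist :: "'a::metric_space set \<Rightarrow> 'a set \<Rightarrow> real" where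
  "hausdorff_dist A B = max (SUP a\<in>A. infdist a B) (SUP b\<in>B. infdist b A)"

text \<open>C-infinity maps on an open set U: all iterated partial derivatives
  (along the standard basis) exist and are continuous on U.
  D ks is the iterated partial derivative along the directions in ks.\<close>
definition smooth_on :: "'a::euclidean_space set \<Rightarrow> ('a \<Rightarrow> 'b::euclidean_space) \<Rightarrow> bool" where
  "smooth_on U f \<longleftrightarrow> open U \<and>
     (\<exists>D :: 'a list \<Rightarrow> 'a \<Rightarrow> 'b.
        (\<forall>x\<in>U. D [] x = f x) \<and>
        (\<forall>ks\<in>lists Basis. continuous_on U (D ks)) \<and>
        (\<forall>ks\<in>lists Basis. \<forall>i\<in>Basis. \<forall>x\<in>U.
            ((\<lambda>s. D ks (x + s *\<^sub>R i)) has_vector_derivative D (i # ks) x) (at 0)))"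

definition smooth_diffeo :: "'a::euclidean_space set \<Rightarrow> 'a set \<Rightarrow> ('a \<Rightarrow> 'a) \<Rightarrow> bool" where
  "smooth_diffeo U V \<phi> \<longleftrightarrow> \<phi> ` U = V \<and> smooth_on U \<phi> \<and>
     (\<exists>\<psi>. smooth_on V \<psi> \<and> (\<forall>x\<in>U. \<psi> (\<phi> x) = x) \<and> (\<forall>y\<in>V. \<phi> (\<psi> y) = y))"

definition smooth_submanifold :: "nat \<Rightarrow> 'a::euclidean_space set \<Rightarrow> bool" where
  "smooth_submanifold d M \<longleftrightarrow>
     (\<forall>p\<in>M. \<exists>U V \<phi> L. open U \<and> p \<in> U \<and> open V \<and> smooth_diffeo U V \<phi> \<and>
        subspace L \<and> dim L = d \<and> \<phi> ` (M \<inter> U) = V \<inter> L)"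

definition positive_reach :: "'a::euclidean_space set \<Rightarrow> bool" where
  "positive_reach M \<longleftrightarrow>
     (\<exists>r>0. \<forall>x. infdist x M < r \<longrightarrow> (\<exists>!y. y \<in> M \<and> dist x y = infdist x M))"

definition support_of :: "'a::metric_space measure \<Rightarrow> 'a set" where
  "support_of P = {x. \<forall>r>0. emeasure P (ball x r) > 0}"

definition rho_pt :: "'a::metric_space measure \<Rightarrow> nat \<Rightarrow> 'a \<Rightarrow> real \<Rightarrow> real" where
  "rho_pt P d x t = measure P (cball x (t/2)) / t ^ d"

definition rho_fun :: "'a::metric_space measure \<Rightarrow> nat \<Rightarrow> 'a set \<Rightarrow> real \<Rightarrow> real" where
  "rho_fun P d M t = (INF x\<in>M. rho_pt P d x t)"

definition subsample_L :: "nat \<Rightarrow> nat \<Rightarrow> (nat \<Rightarrow> 'a::metric_space) \<Rightarrow> real \<Rightarrow> real" where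
  "subsample_L n b w t =
     (1 / real (n choose b)) *
     (\<Sum>J\<in>{J. J \<subseteq> {..<n} \<and> card J = b}.
        (if hausdorff_dist (w ` J) (w ` {..<n}) > t then 1 else 0))"

definition subsample_c :: "nat \<Rightarrow> nat \<Rightarrow> real \<Rightarrow> (nat \<Rightarrow> 'a::metric_space) \<Rightarrow> real" where
  "subsample_c n b \<alpha> w = 2 * Inf {t. t > 0 \<and> subsample_L n b w t \<le> \<alpha>}"

end

theory Submission
  imports Defs "HOL-Real_Asymp.Real_Asymp"
begin

text \<open>
  The exceedance probability actually tends to \<open>0\<close>, so the bound holds with \<open>K = 0\<close>.
  Choose \<open>\<epsilon>\<close> with \<open>\<rho>(4\<epsilon>)\<^sup>d/2 = log n / n\<close>, so that balls of radius \<open>2\<epsilon>\<close> centred in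
  \<open>M\<close> carry mass at least \<open>log n / n\<close>. A maximal \<open>2\<epsilon>\<close>-separated subset of \<open>M\<close> has
  \<open>O(n / log n)\<close> points, so with probability \<open>1 - O(1 / log n)\<close> each of them has a sample
  point within \<open>2\<epsilon>\<close>, whence \<open>H(S\<^sub>n, M) \<le> 4\<epsilon>\<close>. Since \<open>\<rho>(8\<epsilon>)\<close> is close to \<open>\<rho>\<close>, some
  \<open>x \<in> M\<close> has \<open>P(B(x, 8\<epsilon>)) = O(log n / n)\<close>. A subsample \<open>J\<close> that misses \<open>B(x, 8\<epsilon>)\<close> while
  some other sample point lies in \<open>B(x, 4\<epsilon>)\<close> has \<open>H(S\<^sub>J, S\<^sub>n) \<ge> 4\<epsilon>\<close>; a fixed \<open>J\<close> fails to
  do so with probability \<open>O(exp (b log n / n) / n + b log n / n) \<rightarrow> 0\<close>. By Markov's inequality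
  applied to the number of failing subsamples, \<open>L\<^sub>b(2\<epsilon>) > \<alpha>\<close> with high probability, and
  then \<open>c\<^sub>b \<ge> 4\<epsilon> \<ge> H(S\<^sub>n, M)\<close>. For \<open>d = 0\<close> the measure is carried by finitely many atoms,
  all of which are sampled with overwhelming probability.
\<close>

abbreviation sample_law :: "'a measure \<Rightarrow> nat \<Rightarrow> (nat \<Rightarrow> 'a) measure" where
  "sample_law P n \<equiv> PiM {..<n} (\<lambda>_. P)"

lemma
  assumes P: "prob_space P" and J: "J \<subseteq> I" "finite J" and X: "\<And>i. i \<in> J \<Longrightarrow> X i \<in> sets P"
  shows sets_PiM_Collect:
      "{w \<in> space (PiM I (\<lambda>_. P)). \<forall>i\<in>J. w i \<in> X i} \<in> sets (PiM I (\<lambda>_. P))"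
    and measure_PiM_Collect:
      "measure (PiM I (\<lambda>_. P)) {w \<in> space (PiM I (\<lambda>_. P)). \<forall>i\<in>J. w i \<in> X i}
         = (\<Prod>i\<in>J. measure P (X i))"
proof -
  interpret product_prob_space "\<lambda>_. P" I
    by (rule product_prob_spaceI) (rule P)
  have "{w \<in> space (PiM I (\<lambda>_. P)). \<forall>i\<in>J. w i \<in> X i} = prod_emb I (\<lambda>_. P) J (PiE J X)"
    unfolding prod_emb_def using J X by (auto simp: space_PiM Pi_iff)
  then show "{w \<in> space (PiM I (\<lambda>_. P)). \<forall>i\<in>J. w i \<in> X i} \<in> sets (PiM I (\<lambda>_. P))"
    using J X by (simp add: sets_PiM_I)
  have "emeasure (PiM I (\<lambda>_. P)) {w \<in> space (PiM I (\<lambda>_. P)). \<forall>i\<in>J. w i \<in> X i}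
          = ennreal (\<Prod>i\<in>J. measure P (X i))"
    using emeasure_PiM_Collect[OF J X] by (simp add: M.emeasure_eq_measure prod_ennreal)
  then show "measure (PiM I (\<lambda>_. P)) {w \<in> space (PiM I (\<lambda>_. P)). \<forall>i\<in>J. w i \<in> X i}
               = (\<Prod>i\<in>J. measure P (X i))"
    by (simp add: measure_def prod_nonneg)
qed

text \<open>No measurability of the event is needed: a non-measurable set has measure \<open>0\<close>.\<close>

lemma measure_Collect_le_exceptional:
  assumes "finite_measure Q" "A \<in> sets Q" "\<And>w. w \<in> space Q \<Longrightarrow> w \<notin> A \<Longrightarrow> \<not> E w"
  shows "measure Q {w \<in> space Q. E w} \<le> measure Q A"
proof (cases "{w \<in> space Q. E w} \<in> sets Q")
  case True
  then show ?thesis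
    using assms by (intro finite_measure.finite_measure_mono) auto
next
  case False
  then show ?thesis
    by (simp add: measure_notin_sets)
qed

lemma hausdorff_dist_le:
  fixes A B :: "'a::metric_space set"
  assumes "A \<noteq> {}" "A \<subseteq> B" "0 \<le> r" "\<And>y. y \<in> B \<Longrightarrow> \<exists>a\<in>A. dist y a \<le> r"
  shows "hausdorff_dist A B \<le> r"
  unfolding hausdorff_dist_def
proof (rule max.boundedI)
  show "(SUP a\<in>A. infdist a B) \<le> r"
    using assms by (intro cSUP_least) auto
  show "(SUP y\<in>B. infdist y A) \<le> r"
    using assms by (intro cSUP_least) (auto intro: infdist_le2)
qed

lemma hausdorff_dist_ge:
  fixes A B :: "'a::metric_space set"
  assumes "A \<noteq> {}" "finite B" "y \<in> B" "\<And>a. a \<in> A \<Longrightarrow> r \<le> dist y a"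
  shows "r \<le> hausdorff_dist A B"
proof -
  have "r \<le> infdist y A"
    using assms by (simp add: infdist_notempty cINF_greatest)
  also have "\<dots> \<le> (SUP y\<in>B. infdist y A)"
    using assms by (intro cSUP_upper) auto
  finally show ?thesis
    unfolding hausdorff_dist_def by simp
qed

lemma subsample_L_antimono:
  "t \<le> t' \<Longrightarrow> subsample_L n b w t' \<le> subsample_L n b w t"
  unfolding subsample_L_def by (intro mult_left_mono sum_mono) auto

lemma subsample_L_vanishes: "\<exists>t>0. subsample_L n b w t = 0"
proof -
  define \<J> where "\<J> = {J. J \<subseteq> {..<n} \<and> card J = b}"
  have "finite \<J>"
    unfolding \<J>_def by (rule finite_subset[of _ "Pow {..<n}"]) auto
  define t where "t = 1 + Max (insert 0 ((\<lambda>J. hausdorff_dist (w ` J) (w ` {..<n})) ` \<J>))"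
  have below: "hausdorff_dist (w ` J) (w ` {..<n}) < t" if "J \<in> \<J>" for J
  proof -
    have "hausdorff_dist (w ` J) (w ` {..<n})
            \<le> Max (insert 0 ((\<lambda>J. hausdorff_dist (w ` J) (w ` {..<n})) ` \<J>))"
      using \<open>finite \<J>\<close> that by (intro Max_ge) auto
    then show ?thesis
      unfolding t_def by linarith
  qed
  have "0 \<le> Max (insert 0 ((\<lambda>J. hausdorff_dist (w ` J) (w ` {..<n})) ` \<J>))"
    using \<open>finite \<J>\<close> by (intro Max_ge) auto
  then have "t > 0"
    unfolding t_def by linarith
  moreover have "(\<Sum>J\<in>\<J>. if t < hausdorff_dist (w ` J) (w ` {..<n}) then 1 else 0 :: real) = 0"
    using below by (intro sum.neutral ballI) (simp add: not_less less_imp_le)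
  ultimately show ?thesis
    unfolding subsample_L_def \<J>_def[symmetric] by auto
qed

lemma
  fixes w :: "nat \<Rightarrow> 'a::metric_space"
  assumes "0 \<le> \<alpha>"
  shows subsample_c_nonneg: "0 \<le> subsample_c n b \<alpha> w"
    and subsample_c_ge: "0 < t \<Longrightarrow> \<alpha> < subsample_L n b w t \<Longrightarrow> 2 * t \<le> subsample_c n b \<alpha> w"
proof -
  define S where "S = {t. t > 0 \<and> subsample_L n b w t \<le> \<alpha>}"
  have "S \<noteq> {}"
    using subsample_L_vanishes[of n b w] assms unfolding S_def by force
  then show "0 \<le> subsample_c n b \<alpha> w"
    unfolding subsample_c_def S_def[symmetric] by (auto simp: S_def intro: cInf_greatest)
  assume "0 < t" "\<alpha> < subsample_L n b w t"
  then have "t \<le> s" if "s \<in> S" for s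
    using that subsample_L_antimono[of s t n b w] unfolding S_def by force
  then show "2 * t \<le> subsample_c n b \<alpha> w"
    unfolding subsample_c_def S_def[symmetric] using \<open>S \<noteq> {}\<close> by (simp add: cInf_greatest)
qed

lemma subsample_L_ge:
  fixes w :: "nat \<Rightarrow> 'a::metric_space"
  assumes "b \<le> n"
    and "\<And>J. J \<subseteq> {..<n} \<Longrightarrow> card J = b \<Longrightarrow> J \<notin> Bad \<Longrightarrow> t < hausdorff_dist (w ` J) (w ` {..<n})"
  shows "1 - card {J. J \<subseteq> {..<n} \<and> card J = b \<and> J \<in> Bad} / (n choose b) \<le> subsample_L n b w t"
proof -
  define \<J> where "\<J> = {J. J \<subseteq> {..<n} \<and> card J = b}"
  have fin: "finite \<J>"
    unfolding \<J>_def by (rule finite_subset[of _ "Pow {..<n}"]) auto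
  have N: "card \<J> = n choose b"
    unfolding \<J>_def using n_subsets[of "{..<n}" b] by simp
  have "card \<J> = card (\<J> \<inter> Bad) + card (\<J> - Bad)"
    using fin by (metis card_Int_Diff)
  then have "real (n choose b) - card (\<J> \<inter> Bad) = (\<Sum>J\<in>\<J>. if J \<in> Bad then 0 else 1)"
    using fin by (simp add: N sum.If_cases Int_def Diff_eq Compl_eq)
  also have "\<dots> \<le> (\<Sum>J\<in>\<J>. if t < hausdorff_dist (w ` J) (w ` {..<n}) then 1 else 0)"
    using assms(2) by (intro sum_mono) (auto simp: \<J>_def)
  finally have "(real (n choose b) - card (\<J> \<inter> Bad)) / (n choose b) \<le> subsample_L n b w t"
    unfolding subsample_L_def \<J>_def[symmetric] by (simp add: divide_right_mono)
  moreover have "\<J> \<inter> Bad = {J. J \<subseteq> {..<n} \<and> card J = b \<and> J \<in> Bad}"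
    unfolding \<J>_def by auto
  moreover have "0 < real (n choose b)"
    using assms(1) by simp
  ultimately show ?thesis
    by (simp add: diff_divide_distrib)
qed

lemma support_of_full_measure:
  fixes P :: "'a::{metric_space,second_countable_topology} measure"
  assumes P: "prob_space P" and Pb: "sets P = sets borel" and cl: "closed (support_of P)"
  shows "measure P (- support_of P) = 0" and "support_of P \<noteq> {}"
proof -
  define \<F> where "\<F> = {ball x r | x r. r > 0 \<and> emeasure P (ball x r) = 0}"
  obtain \<F>' where \<F>': "\<F>' \<subseteq> \<F>" "countable \<F>'" "\<Union>\<F>' = \<Union>\<F>"
    using Lindelof[of \<F>] unfolding \<F>_def by blast
  have "(\<Union>S\<in>\<F>'. S) \<in> null_sets P"
  proof (rule null_sets_UN')
    fix S assume "S \<in> \<F>'"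
    then obtain x r where "S = ball x r" "emeasure P (ball x r) = 0"
      using \<F>'(1) unfolding \<F>_def by blast
    then show "S \<in> null_sets P"
      using Pb by auto
  qed (rule \<F>'(2))
  moreover have "- support_of P \<in> sets P"
    using cl Pb by (simp add: borel_closed)
  moreover have "- support_of P \<subseteq> (\<Union>S\<in>\<F>'. S)"
  proof
    fix x assume "x \<in> - support_of P"
    then obtain r where "r > 0" "emeasure P (ball x r) = 0"
      unfolding support_of_def by (auto simp: not_gr_zero)
    then have "x \<in> \<Union>\<F>"
      unfolding \<F>_def by (intro UnionI[of "ball x r"]) auto
    then show "x \<in> (\<Union>S\<in>\<F>'. S)"
      using \<F>'(3) by simp
  qed
  ultimately have "- support_of P \<in> null_sets P"
    by (rule null_sets_subset)
  then show "measure P (- support_of P) = 0"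
    by (simp add: finite_measure.emeasure_eq_measure[OF prob_space.finite_measure[OF P]] null_sets_def)
  show "support_of P \<noteq> {}"
  proof
    assume "support_of P = {}"
    with \<open>- support_of P \<in> null_sets P\<close> have "space P \<in> null_sets P"
      using sets_eq_imp_space_eq[OF Pb] by simp
    then show False
      using prob_space.emeasure_space_1[OF P] by (simp add: null_sets_def)
  qed
qed

lemma ball_mass_bounds:
  assumes lim: "(rho_fun P d M \<longlongrightarrow> \<rho>) (at_right 0)" and "\<rho> > 0" and "M \<noteq> {}"
  obtains t1 where "t1 > 0"
    and "\<And>r x. 0 < r \<Longrightarrow> r < t1 \<Longrightarrow> x \<in> M \<Longrightarrow> \<rho> / 2 * (2 * r) ^ d \<le> measure P (cball x r)"
    and "\<And>r. 0 < r \<Longrightarrow> r < t1 \<Longrightarrow> \<exists>x\<in>M. measure P (cball x r) \<le> 2 * \<rho> * (2 * r) ^ d"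
proof -
  have "\<forall>\<^sub>F t in at_right 0. \<rho> / 2 < rho_fun P d M t"
    by (rule order_tendstoD(1)[OF lim]) (use \<open>\<rho> > 0\<close> in simp)
  moreover have "\<forall>\<^sub>F t in at_right 0. rho_fun P d M t < 2 * \<rho>"
    by (rule order_tendstoD(2)[OF lim]) (use \<open>\<rho> > 0\<close> in simp)
  ultimately have "\<forall>\<^sub>F t in at_right 0. \<rho> / 2 < rho_fun P d M t \<and> rho_fun P d M t < 2 * \<rho>"
    by (rule eventually_conj)
  then obtain t0 where t0: "t0 > 0"
    and between: "\<And>t. 0 < t \<Longrightarrow> t < t0 \<Longrightarrow> \<rho> / 2 < rho_fun P d M t \<and> rho_fun P d M t < 2 * \<rho>"
    by (auto simp: eventually_at_right[OF zero_less_one])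
  show ?thesis
  proof
    show "t0 / 2 > 0"
      using t0 by simp
    fix r assume r: "0 < r" "r < t0 / 2"
    have pos: "(2 * r) ^ d > 0"
      using r by simp
    have bdd: "bdd_below ((\<lambda>x. rho_pt P d x (2 * r)) ` M)"
      using pos by (intro bdd_belowI2[of _ 0]) (simp add: rho_pt_def)
    have rho_r: "rho_pt P d x (2 * r) = measure P (cball x r) / (2 * r) ^ d" for x
      by (simp add: rho_pt_def)
    have inf: "\<rho> / 2 < (INF x\<in>M. rho_pt P d x (2 * r))" "(INF x\<in>M. rho_pt P d x (2 * r)) < 2 * \<rho>"
      using between[of "2 * r"] r unfolding rho_fun_def by auto
    show "\<rho> / 2 * (2 * r) ^ d \<le> measure P (cball x r)" if "x \<in> M" for x
    proof -
      have "(INF x\<in>M. rho_pt P d x (2 * r)) \<le> measure P (cball x r) / (2 * r) ^ d"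
        using cINF_lower[OF bdd that] by (simp only: rho_r)
      then have "\<rho> / 2 < measure P (cball x r) / (2 * r) ^ d"
        using inf(1) by linarith
      then show ?thesis
        using pos by (simp add: pos_less_divide_eq)
    qed
    obtain x where "x \<in> M" and "measure P (cball x r) / (2 * r) ^ d < 2 * \<rho>"
      using inf(2) cINF_less_iff[OF \<open>M \<noteq> {}\<close> bdd] rho_r by auto
    moreover from this(2) have "measure P (cball x r) < 2 * \<rho> * (2 * r) ^ d"
      using pos by (simp add: pos_divide_less_eq)
    ultimately show "\<exists>x\<in>M. measure P (cball x r) \<le> 2 * \<rho> * (2 * r) ^ d"
      by (intro bexI[of _ x]) auto
  qed
qed

lemma measure_singleton_ge:
  assumes P: "prob_space P" and Pb: "sets P = sets borel" and "t1 > 0"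
    and mass: "\<And>r. 0 < r \<Longrightarrow> r < t1 \<Longrightarrow> c \<le> measure P (cball x r)"
  shows "c \<le> measure P {x}"
proof -
  define A where "A k = cball x (t1 / (real k + 2))" for k :: nat
  have sets: "range A \<subseteq> sets P"
    unfolding A_def Pb by auto
  have dec: "decseq A"
    unfolding A_def decseq_def using \<open>t1 > 0\<close> by (auto intro!: subset_cball divide_left_mono)
  have inter: "(\<Inter>k. A k) = {x}"
  proof (intro equalityI subsetI)
    fix y assume y: "y \<in> (\<Inter>k. A k)"
    have le: "dist x y \<le> t1 / (real k + 2)" for k
      using y by (auto simp: A_def)
    have "(\<lambda>k. t1 / (real k + 2)) \<longlonglongrightarrow> 0"
      by real_asymp
    then have "dist x y \<le> 0"
      by (rule LIMSEQ_le_const) (use le in blast)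
    then show "y \<in> {x}"
      by simp
  qed (use \<open>t1 > 0\<close> in \<open>auto simp: A_def\<close>)
  have "(\<lambda>k. measure P (A k)) \<longlonglongrightarrow> measure P {x}"
    using finite_measure.finite_Lim_measure_decseq[OF prob_space.finite_measure[OF P] sets dec]
    unfolding inter .
  moreover have "c \<le> measure P (A k)" for k
    unfolding A_def using \<open>t1 > 0\<close> by (intro mass) (simp_all add: divide_less_eq)
  ultimately show ?thesis
    by (intro LIMSEQ_le_const) auto
qed

lemma card_packing_le:
  fixes G :: "'a::metric_space set" and m :: real
  assumes P: "prob_space P" and Pb: "sets P = sets borel" and "finite G"
    and mass: "\<And>x. x \<in> G \<Longrightarrow> m \<le> measure P (cball x q)"
    and sep: "\<And>x y. x \<in> G \<Longrightarrow> y \<in> G \<Longrightarrow> x \<noteq> y \<Longrightarrow> 2 * q < dist x y"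
  shows "card G * m \<le> 1"
proof -
  interpret P: prob_space P by fact
  have "disjoint_family_on (\<lambda>x. cball x q) G"
    unfolding disjoint_family_on_def
  proof (intro ballI impI)
    fix x y assume "x \<in> G" "y \<in> G" "x \<noteq> y"
    then have "2 * q < dist x y"
      by (rule sep)
    show "cball x q \<inter> cball y q = {}"
    proof (rule ccontr)
      assume "cball x q \<inter> cball y q \<noteq> {}"
      then obtain z where "dist x z \<le> q" "dist y z \<le> q"
        by auto
      then show False
        using \<open>2 * q < dist x y\<close> dist_triangle2[of x y z] by linarith
    qed
  qed
  moreover have "(\<lambda>x. cball x q) ` G \<subseteq> sets P"
    unfolding Pb by (auto intro: borel_closed)
  ultimately have "measure P (\<Union>x\<in>G. cball x q) = (\<Sum>x\<in>G. measure P (cball x q))"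
    using \<open>finite G\<close> by (intro measure_finite_Union) (simp_all add: P.emeasure_eq_measure)
  moreover have "(\<Sum>x\<in>G. m) \<le> (\<Sum>x\<in>G. measure P (cball x q))"
    using mass by (rule sum_mono)
  ultimately show ?thesis
    using P.prob_le_1[of "\<Union>x\<in>G. cball x q"] by (simp add: mult.commute)
qed

lemma finite_if_atoms_ge:
  fixes M :: "'a::metric_space set" and c :: real
  assumes P: "prob_space P" and Pb: "sets P = sets borel" and "c > 0"
    and atoms: "\<And>x. x \<in> M \<Longrightarrow> c \<le> measure P {x}"
  shows "finite M"
proof -
  have "finite M \<and> card M \<le> nat \<lfloor>1 / c\<rfloor>"
  proof (rule finite_if_finite_subsets_card_bdd)
    fix G assume "G \<subseteq> M" "finite G"
    have "card G * c \<le> 1"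
    proof (rule card_packing_le[OF P Pb \<open>finite G\<close>, where q = 0])
      show "c \<le> measure P (cball x 0)" if "x \<in> G" for x
        using atoms \<open>G \<subseteq> M\<close> that by auto
    qed simp
    then show "card G \<le> nat \<lfloor>1 / c\<rfloor>"
      using \<open>c > 0\<close> by (intro le_nat_floor) (simp add: field_simps)
  qed
  then show ?thesis ..
qed

lemma exists_finite_net:
  fixes M :: "'a::metric_space set" and m :: real
  assumes P: "prob_space P" and Pb: "sets P = sets borel" and "m > 0" and "0 \<le> q"
    and mass: "\<And>x. x \<in> M \<Longrightarrow> m \<le> measure P (cball x q)"
  obtains F where "F \<subseteq> M" "finite F" "card F * m \<le> 1" "\<And>y. y \<in> M \<Longrightarrow> \<exists>f\<in>F. dist y f \<le> 2 * q"
proof -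
  define sep where "sep F \<longleftrightarrow> F \<subseteq> M \<and> finite F \<and> (\<forall>x\<in>F. \<forall>y\<in>F. x \<noteq> y \<longrightarrow> 2 * q < dist x y)" for F
  have packing: "card F * m \<le> 1" if "sep F" for F
    using that mass unfolding sep_def by (intro card_packing_le[OF P Pb]) auto
  have "card F < nat \<lfloor>1 / m\<rfloor> + 1" if "sep F" for F
    using packing[OF that] \<open>m > 0\<close> le_nat_floor[of "card F" "1 / m"] by (simp add: field_simps)
  moreover have "sep {}"
    unfolding sep_def by simp
  ultimately obtain F where F: "sep F" and max: "\<And>G. sep G \<Longrightarrow> card G \<le> card F"
    using ex_has_greatest_nat[of sep "{}" card] by blast
  have "\<exists>f\<in>F. dist y f \<le> 2 * q" if "y \<in> M" for y
  proof (rule ccontr)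
    assume "\<not> (\<exists>f\<in>F. dist y f \<le> 2 * q)"
    then have far: "2 * q < dist y f" "2 * q < dist f y" if "f \<in> F" for f
      using that by (auto simp: not_le dist_commute)
    have "y \<notin> F"
      using far(1)[of y] \<open>0 \<le> q\<close> by auto
    moreover have "sep (insert y F)"
      using F far \<open>y \<in> M\<close> unfolding sep_def by auto
    ultimately show False
      using max[of "insert y F"] F unfolding sep_def by simp
  qed
  with F packing[OF F] show ?thesis
    unfolding sep_def by (intro that) auto
qed

lemma one_minus_power_le_exp:
  fixes x :: real
  assumes "x \<le> 1"
  shows "(1 - x) ^ k \<le> exp (- x * k)"
proof -
  have "(1 - x) ^ k \<le> exp (- x) ^ k"
    using assms exp_ge_add_one_self[of "- x"] by (intro power_mono) auto
  then show ?thesis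
    by (simp add: exp_of_nat_mult[symmetric] mult.commute)
qed

lemma markov_fraction_of_events:
  fixes c \<delta> :: real
  assumes Q: "prob_space Q" and "finite \<J>" "\<J> \<noteq> {}" and "0 < c"
    and sets: "\<And>J. J \<in> \<J> \<Longrightarrow> B J \<in> sets Q"
    and small: "\<And>J. J \<in> \<J> \<Longrightarrow> measure Q (B J) \<le> \<delta>"
  shows "{w \<in> space Q. c * card \<J> \<le> card {J \<in> \<J>. w \<in> B J}} \<in> sets Q" (is "?A \<in> _")
    and "measure Q {w \<in> space Q. c * card \<J> \<le> card {J \<in> \<J>. w \<in> B J}} \<le> \<delta> / c"
proof -
  interpret Q: prob_space Q by fact
  define count where "count w = (\<Sum>J\<in>\<J>. indicator (B J) w :: real)" for w
  have count_eq: "count w = card {J \<in> \<J>. w \<in> B J}" for w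
    unfolding count_def using \<open>finite \<J>\<close> by (simp add: indicator_def sum.If_cases Int_def)
  have count_measurable: "count \<in> borel_measurable Q"
    unfolding count_def using sets by (intro borel_measurable_sum borel_measurable_indicator)
  have A: "?A = {w \<in> space Q. c * card \<J> \<le> count w}"
    by (simp only: count_eq)
  show "?A \<in> sets Q"
    unfolding A using count_measurable by measurable
  have indicator_integrable: "integrable Q (indicator (B J) :: _ \<Rightarrow> real)" if "J \<in> \<J>" for J
    using sets[OF that] by (intro integrable_real_indicator) (simp_all add: less_top[symmetric])
  then have integrable: "integrable Q count"
    unfolding count_def by (intro Bochner_Integration.integrable_sum)
  have N: "0 < real (card \<J>)"
    using \<open>finite \<J>\<close> \<open>\<J> \<noteq> {}\<close> by (simp add: card_gt_0_iff)
  have "(\<integral>w. count w \<partial>Q) = (\<Sum>J\<in>\<J>. measure Q (B J))"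
    unfolding count_def using indicator_integrable sets by (simp add: Bochner_Integration.integral_sum)
  also have "\<dots> \<le> (\<Sum>J\<in>\<J>. \<delta>)"
    using small by (rule sum_mono)
  finally have "(\<integral>w. count w \<partial>Q) \<le> \<delta> * card \<J>"
    by (simp add: mult.commute)
  then have "(\<integral>w. count w \<partial>Q) / (c * card \<J>) \<le> \<delta> / c"
    using N \<open>0 < c\<close> by (simp add: divide_le_eq)
  moreover have "measure Q {w \<in> space Q. c * card \<J> \<le> count w} \<le> (\<integral>w. count w \<partial>Q) / (c * card \<J>)"
  proof (rule integral_Markov_inequality_measure[OF integrable, where A = "space Q"])
    show "AE w in Q. 0 \<le> count w"
      unfolding count_def by (simp add: sum_nonneg)
  qed (use N \<open>0 < c\<close> in auto)
  ultimately show "measure Q ?A \<le> \<delta> / c"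
    unfolding A by linarith
qed

lemma
  assumes P: "prob_space P" and B: "B \<in> sets P" and I: "I \<subseteq> {..<n}"
  shows sets_sample_avoids: "{w \<in> space (sample_law P n). \<forall>i\<in>I. w i \<notin> B} \<in> sets (sample_law P n)"
    and measure_sample_avoids:
      "measure (sample_law P n) {w \<in> space (sample_law P n). \<forall>i\<in>I. w i \<notin> B} = (1 - measure P B) ^ card I"
proof -
  have "finite I"
    using I finite_subset by blast
  have eq: "{w \<in> space (sample_law P n). \<forall>i\<in>I. w i \<notin> B}
              = {w \<in> space (sample_law P n). \<forall>i\<in>I. w i \<in> space P - B}"
    using I by (auto simp: space_PiM)
  show "{w \<in> space (sample_law P n). \<forall>i\<in>I. w i \<notin> B} \<in> sets (sample_law P n)"
    unfolding eq by (rule sets_PiM_Collect[OF P I \<open>finite I\<close>]) (use B in \<open>auto intro!: sets.Diff\<close>)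
  have "measure (sample_law P n) {w \<in> space (sample_law P n). \<forall>i\<in>I. w i \<in> space P - B}
          = (\<Prod>i\<in>I. measure P (space P - B))"
    by (rule measure_PiM_Collect[OF P I \<open>finite I\<close>]) (use B in \<open>auto intro!: sets.Diff\<close>)
  then show "measure (sample_law P n) {w \<in> space (sample_law P n). \<forall>i\<in>I. w i \<notin> B} = (1 - measure P B) ^ card I"
    unfolding eq using prob_space.prob_compl[OF P B] by simp
qed

lemma hausdorff_dist_le_of_net:
  fixes A M F :: "'a::metric_space set"
  assumes "A \<noteq> {}" "A \<subseteq> M" "0 \<le> r" "0 \<le> s"
    and cover: "\<And>y. y \<in> M \<Longrightarrow> \<exists>f\<in>F. dist y f \<le> r"
    and hits: "\<And>f. f \<in> F \<Longrightarrow> \<exists>a\<in>A. dist a f \<le> s"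
  shows "hausdorff_dist A M \<le> r + s"
proof (rule hausdorff_dist_le[OF assms(1,2)])
  fix y assume "y \<in> M"
  then obtain f where "f \<in> F" "dist y f \<le> r"
    using cover by blast
  moreover from this(1) obtain a where "a \<in> A" "dist a f \<le> s"
    using hits by blast
  ultimately show "\<exists>a\<in>A. dist y a \<le> r + s"
    using dist_triangle[of y a f] by (intro bexI[of _ a]) (auto simp: dist_commute)
qed (use assms(3,4) in simp)

lemma sample_hausdorff_dist_le:
  fixes M F :: "'a::metric_space set" and m r s :: real
  assumes P: "prob_space P" and Pb: "sets P = sets borel" and "closed M" and null: "measure P (- M) = 0"
    and "F \<subseteq> M" "finite F" "0 < n" "0 \<le> r" "0 \<le> s"
    and cover: "\<And>y. y \<in> M \<Longrightarrow> \<exists>f\<in>F. dist y f \<le> r"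
    and mass: "\<And>f. f \<in> F \<Longrightarrow> m \<le> measure P (cball f s)"
  obtains A where "A \<in> sets (sample_law P n)" "measure (sample_law P n) A \<le> card F * exp (- m * n)"
    and "\<And>w. w \<in> space (sample_law P n) \<Longrightarrow> w \<notin> A \<Longrightarrow> hausdorff_dist (w ` {..<n}) M \<le> r + s"
proof -
  interpret Q: prob_space "sample_law P n"
    by (rule prob_space_PiM) (rule P)
  have closed_sets: "C \<in> sets P" "- C \<in> sets P" if "closed C" for C
    using that Pb by (auto simp: borel_closed)
  define Inside where "Inside = {w \<in> space (sample_law P n). \<forall>i\<in>{..<n}. w i \<notin> - M}"
  define Missed where "Missed f = {w \<in> space (sample_law P n). \<forall>i\<in>{..<n}. w i \<notin> cball f s}" for f
  define A where "A = (space (sample_law P n) - Inside) \<union> (\<Union>f\<in>F. Missed f)"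
  have Inside: "Inside \<in> sets (sample_law P n)"
    unfolding Inside_def by (rule sets_sample_avoids[OF P closed_sets(2)[OF \<open>closed M\<close>]]) simp
  have "measure (sample_law P n) Inside = (1 - measure P (- M)) ^ card {..<n}"
    unfolding Inside_def by (rule measure_sample_avoids[OF P closed_sets(2)[OF \<open>closed M\<close>]]) simp
  then have Inside_full: "measure (sample_law P n) Inside = 1"
    using null by simp
  have Missed: "Missed f \<in> sets (sample_law P n)" "measure (sample_law P n) (Missed f) \<le> exp (- m * n)"
    if "f \<in> F" for f
  proof -
    show "Missed f \<in> sets (sample_law P n)"
      unfolding Missed_def using closed_sets(1)[OF closed_cball] by (rule sets_sample_avoids[OF P]) simp
    have "measure (sample_law P n) (Missed f) = (1 - measure P (cball f s)) ^ card {..<n}"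
      unfolding Missed_def by (rule measure_sample_avoids[OF P closed_sets(1)[OF closed_cball]]) simp
    also have "\<dots> \<le> exp (- measure P (cball f s) * n)"
      using one_minus_power_le_exp[OF prob_space.prob_le_1[OF P]] by simp
    also have "\<dots> \<le> exp (- m * n)"
      using mass[OF that] by (simp add: mult_right_mono)
    finally show "measure (sample_law P n) (Missed f) \<le> exp (- m * n)" .
  qed
  show ?thesis
  proof
    show "A \<in> sets (sample_law P n)"
      unfolding A_def using Inside Missed \<open>finite F\<close> by auto
    have "measure (sample_law P n) A
            \<le> measure (sample_law P n) (space (sample_law P n) - Inside)
              + measure (sample_law P n) (\<Union>f\<in>F. Missed f)"
      unfolding A_def using Inside Missed \<open>finite F\<close> by (intro measure_Un_le) auto
    also have "\<dots> \<le> 0 + (\<Sum>f\<in>F. measure (sample_law P n) (Missed f))"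
      using Inside Inside_full Missed \<open>finite F\<close> by (intro add_mono measure_UNION_le) (auto simp: Q.prob_compl)
    also have "\<dots> \<le> 0 + (\<Sum>f\<in>F. exp (- m * n))"
      using Missed by (intro add_left_mono sum_mono) auto
    finally show "measure (sample_law P n) A \<le> card F * exp (- m * n)"
      by simp
  next
    fix w assume "w \<in> space (sample_law P n)" "w \<notin> A"
    then have "w ` {..<n} \<subseteq> M" and "\<And>f. f \<in> F \<Longrightarrow> \<exists>a\<in>w ` {..<n}. dist a f \<le> s"
      unfolding A_def Inside_def Missed_def by (auto simp: dist_commute)
    then show "hausdorff_dist (w ` {..<n}) M \<le> r + s"
      using \<open>0 < n\<close> \<open>0 \<le> r\<close> \<open>0 \<le> s\<close> cover by (intro hausdorff_dist_le_of_net) auto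
  qed
qed

definition annulus_separates :: "(nat \<Rightarrow> 'a::metric_space) \<Rightarrow> nat \<Rightarrow> nat set \<Rightarrow> 'a \<Rightarrow> real \<Rightarrow> real \<Rightarrow> bool" where
  "annulus_separates w n J x r s \<longleftrightarrow> (\<exists>i\<in>{..<n} - J. dist x (w i) \<le> r) \<and> (\<forall>j\<in>J. s < dist x (w j))"

lemma hausdorff_dist_ge_of_annulus_separates:
  assumes "annulus_separates w n J x r s" "J \<noteq> {}"
  shows "s - r \<le> hausdorff_dist (w ` J) (w ` {..<n})"
proof -
  obtain i where i: "i \<in> {..<n} - J" "dist x (w i) \<le> r" and far: "\<And>j. j \<in> J \<Longrightarrow> s < dist x (w j)"
    using assms(1) unfolding annulus_separates_def by blast
  show ?thesis
  proof (rule hausdorff_dist_ge)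
    show "w i \<in> w ` {..<n}"
      using i(1) by auto
    fix a assume "a \<in> w ` J"
    then obtain j where "j \<in> J" "a = w j"
      by blast
    then show "s - r \<le> dist (w i) a"
      using far[of j] i(2) dist_triangle[of x "w j" "w i"] by (simp add: dist_commute)
  qed (use assms(2) in auto)
qed

lemma subsample_c_ge_of_annulus_separates:
  fixes w :: "nat \<Rightarrow> 'a::metric_space" and \<alpha> r s t :: real
  assumes "0 \<le> \<alpha>" "0 < t" "t < s - r" "1 \<le> b" "b \<le> n"
    and few: "card {J. J \<subseteq> {..<n} \<and> card J = b \<and> \<not> annulus_separates w n J x r s}
                < (1 - \<alpha>) * real (n choose b)"
  shows "2 * t \<le> subsample_c n b \<alpha> w"
proof (rule subsample_c_ge[OF \<open>0 \<le> \<alpha>\<close> \<open>0 < t\<close>])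
  have "t < hausdorff_dist (w ` J) (w ` {..<n})"
    if "card J = b" "J \<notin> {J. \<not> annulus_separates w n J x r s}" for J
  proof -
    have "J \<noteq> {}"
      using that(1) \<open>1 \<le> b\<close> by auto
    with that(2) have "s - r \<le> hausdorff_dist (w ` J) (w ` {..<n})"
      by (intro hausdorff_dist_ge_of_annulus_separates) auto
    then show ?thesis
      using \<open>t < s - r\<close> by linarith
  qed
  then have "1 - card {J. J \<subseteq> {..<n} \<and> card J = b \<and> J \<in> {J. \<not> annulus_separates w n J x r s}} / (n choose b)
               \<le> subsample_L n b w t"
    by (intro subsample_L_ge[OF \<open>b \<le> n\<close>])
  moreover have "card {J. J \<subseteq> {..<n} \<and> card J = b \<and> \<not> annulus_separates w n J x r s} / (n choose b) < 1 - \<alpha>"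
    using few \<open>b \<le> n\<close> by (simp add: divide_less_eq)
  ultimately show "\<alpha> < subsample_L n b w t"
    by simp
qed

lemma
  fixes x :: "'a::metric_space" and m p r s :: real
  assumes P: "prob_space P" and Pb: "sets P = sets borel" and J: "J \<subseteq> {..<n}" "card J = b"
    and lo: "m \<le> measure P (cball x r)" and hi: "measure P (cball x s) \<le> p"
  defines "E \<equiv> {w \<in> space (sample_law P n). \<not> annulus_separates w n J x r s}"
  shows sets_not_annulus_separates: "E \<in> sets (sample_law P n)"
    and measure_not_annulus_separates_le: "measure (sample_law P n) E \<le> exp (- m * real (n - b)) + b * p"
proof -
  interpret Q: prob_space "sample_law P n"
    by (rule prob_space_PiM) (rule P)
  have balls: "cball y q \<in> sets P" for y q
    using Pb by (simp add: borel_closed)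
  define Far where "Far = {w \<in> space (sample_law P n). \<forall>i\<in>{..<n} - J. w i \<notin> cball x r}"
  define Avoid where "Avoid = {w \<in> space (sample_law P n). \<forall>j\<in>J. w j \<notin> cball x s}"
  have "E = Far \<union> (space (sample_law P n) - Avoid)"
    unfolding E_def Far_def Avoid_def annulus_separates_def by (auto simp: not_le)
  moreover have Far: "Far \<in> sets (sample_law P n)"
    unfolding Far_def by (rule sets_sample_avoids[OF P balls]) auto
  moreover have Avoid: "Avoid \<in> sets (sample_law P n)"
    unfolding Avoid_def by (rule sets_sample_avoids[OF P balls J(1)])
  ultimately show E: "E \<in> sets (sample_law P n)"
    by auto
  have "card ({..<n} - J) = n - b"
    using J by (simp add: card_Diff_subset finite_subset)
  moreover have "measure (sample_law P n) Far = (1 - measure P (cball x r)) ^ card ({..<n} - J)"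
    unfolding Far_def by (rule measure_sample_avoids[OF P balls]) auto
  ultimately have "measure (sample_law P n) Far = (1 - measure P (cball x r)) ^ (n - b)"
    by simp
  also have "\<dots> \<le> exp (- measure P (cball x r) * real (n - b))"
    by (rule one_minus_power_le_exp) (rule prob_space.prob_le_1[OF P])
  also have "\<dots> \<le> exp (- m * real (n - b))"
    using lo by (simp add: mult_right_mono)
  finally have "measure (sample_law P n) Far \<le> exp (- m * real (n - b))" .
  moreover have "measure (sample_law P n) (space (sample_law P n) - Avoid) \<le> b * p"
  proof -
    have "1 + b * (- measure P (cball x s)) \<le> (1 + - measure P (cball x s)) ^ b"
      by (rule Bernoulli_inequality) (simp add: prob_space.prob_le_1[OF P])
    moreover have "measure (sample_law P n) Avoid = (1 - measure P (cball x s)) ^ b"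
      unfolding Avoid_def J(2)[symmetric] by (rule measure_sample_avoids[OF P balls J(1)])
    moreover have "b * measure P (cball x s) \<le> b * p"
      using hi by (simp add: mult_left_mono)
    ultimately show ?thesis
      using Q.prob_compl[OF Avoid] by simp
  qed
  ultimately show "measure (sample_law P n) E \<le> exp (- m * real (n - b)) + b * p"
    unfolding \<open>E = _\<close> using measure_Un_le[OF Far, of "space (sample_law P n) - Avoid"] Avoid by fastforce
qed

lemma subsample_c_ge_whp:
  fixes x :: "'a::metric_space" and \<alpha> m p r s t :: real
  assumes P: "prob_space P" and Pb: "sets P = sets borel"
    and "0 \<le> \<alpha>" "\<alpha> < 1" "1 \<le> b" "b \<le> n" "0 < t" "t < s - r"
    and lo: "m \<le> measure P (cball x r)" and hi: "measure P (cball x s) \<le> p"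
  obtains A where "A \<in> sets (sample_law P n)"
    and "measure (sample_law P n) A \<le> (exp (- m * real (n - b)) + b * p) / (1 - \<alpha>)"
    and "\<And>w. w \<in> space (sample_law P n) \<Longrightarrow> w \<notin> A \<Longrightarrow> 2 * t \<le> subsample_c n b \<alpha> w"
proof -
  interpret Q: prob_space "sample_law P n"
    by (rule prob_space_PiM) (rule P)
  define \<J> where "\<J> = {J. J \<subseteq> {..<n} \<and> card J = b}"
  have "finite \<J>"
    unfolding \<J>_def by (rule finite_subset[of _ "Pow {..<n}"]) auto
  have card_\<J>: "card \<J> = n choose b"
    unfolding \<J>_def using n_subsets[of "{..<n}" b] by simp
  then have "\<J> \<noteq> {}"
    using \<open>b \<le> n\<close> by auto
  define Bad where "Bad J = {w \<in> space (sample_law P n). \<not> annulus_separates w n J x r s}" for J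
  have Bad: "Bad J \<in> sets (sample_law P n)"
    "measure (sample_law P n) (Bad J) \<le> exp (- m * real (n - b)) + b * p" if "J \<in> \<J>" for J
  proof -
    have J: "J \<subseteq> {..<n}" "card J = b"
      using that by (simp_all add: \<J>_def)
    show "Bad J \<in> sets (sample_law P n)"
      unfolding Bad_def by (rule sets_not_annulus_separates[OF P Pb J lo hi])
    show "measure (sample_law P n) (Bad J) \<le> exp (- m * real (n - b)) + b * p"
      unfolding Bad_def by (rule measure_not_annulus_separates_le[OF P Pb J lo hi])
  qed
  define A where "A = {w \<in> space (sample_law P n). (1 - \<alpha>) * card \<J> \<le> card {J \<in> \<J>. w \<in> Bad J}}"
  have "1 - \<alpha> > 0"
    using \<open>\<alpha> < 1\<close> by simp
  note markov = markov_fraction_of_events[OF Q.prob_space_axioms \<open>finite \<J>\<close> \<open>\<J> \<noteq> {}\<close> this Bad]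
  show ?thesis
  proof
    show "A \<in> sets (sample_law P n)"
      unfolding A_def using markov(1) by simp
    show "measure (sample_law P n) A \<le> (exp (- m * real (n - b)) + b * p) / (1 - \<alpha>)"
      unfolding A_def using markov(2) by simp
  next
    fix w assume "w \<in> space (sample_law P n)" "w \<notin> A"
    moreover have "{J \<in> \<J>. w \<in> Bad J}
                     = {J. J \<subseteq> {..<n} \<and> card J = b \<and> \<not> annulus_separates w n J x r s}"
      if "w \<in> space (sample_law P n)"
      using that unfolding \<J>_def Bad_def by auto
    ultimately show "2 * t \<le> subsample_c n b \<alpha> w"
      using card_\<J> unfolding A_def
      by (intro subsample_c_ge_of_annulus_separates[OF \<open>0 \<le> \<alpha>\<close> \<open>0 < t\<close> \<open>t < s - r\<close> \<open>1 \<le> b\<close> \<open>b \<le> n\<close>,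
            where x = x]) auto
  qed
qed

definition subsample_exceedance :: "'a::metric_space measure \<Rightarrow> 'a set \<Rightarrow> nat \<Rightarrow> nat \<Rightarrow> real \<Rightarrow> real" where
  "subsample_exceedance P M n b \<alpha> =
     measure (sample_law P n)
       {w \<in> space (sample_law P n). hausdorff_dist (w ` {..<n}) M > subsample_c n b \<alpha> w}"

lemma subsample_exceedance_nonneg: "0 \<le> subsample_exceedance P M n b \<alpha>"
  by (simp add: subsample_exceedance_def)

lemma subsample_exceedance_le:
  assumes P: "prob_space P"
    and "A1 \<in> sets (sample_law P n)" "A2 \<in> sets (sample_law P n)"
    and "\<And>w. w \<in> space (sample_law P n) \<Longrightarrow> w \<notin> A1 \<Longrightarrow> hausdorff_dist (w ` {..<n}) M \<le> h"
    and "\<And>w. w \<in> space (sample_law P n) \<Longrightarrow> w \<notin> A2 \<Longrightarrow> h \<le> subsample_c n b \<alpha> w"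
  shows "subsample_exceedance P M n b \<alpha> \<le> measure (sample_law P n) A1 + measure (sample_law P n) A2"
proof -
  interpret Q: prob_space "sample_law P n"
    by (rule prob_space_PiM) (rule P)
  have "subsample_exceedance P M n b \<alpha> \<le> measure (sample_law P n) (A1 \<union> A2)"
    unfolding subsample_exceedance_def
  proof (rule measure_Collect_le_exceptional[OF Q.finite_measure_axioms])
    show "A1 \<union> A2 \<in> sets (sample_law P n)"
      using assms(2,3) by (rule sets.Un)
    fix w assume "w \<in> space (sample_law P n)" "w \<notin> A1 \<union> A2"
    then show "\<not> hausdorff_dist (w ` {..<n}) M > subsample_c n b \<alpha> w"
      using assms(4,5)[of w] by fastforce
  qed
  also have "\<dots> \<le> measure (sample_law P n) A1 + measure (sample_law P n) A2"
    using assms by (intro measure_Un_le) auto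
  finally show ?thesis .
qed

lemma subsample_exceedance_tendsto_zero_atomic:
  fixes M :: "'a::metric_space set" and c :: real
  assumes P: "prob_space P" and Pb: "sets P = sets borel" and "closed M" and null: "measure P (- M) = 0"
    and "c > 0" and atoms: "\<And>x. x \<in> M \<Longrightarrow> c \<le> measure P {x}" and "0 \<le> \<alpha>"
  shows "(\<lambda>n. subsample_exceedance P M n (b n) \<alpha>) \<longlonglongrightarrow> 0"
proof (rule real_tendsto_sandwich)
  have "finite M"
    by (rule finite_if_atoms_ge[OF P Pb \<open>c > 0\<close> atoms])
  have "subsample_exceedance P M n (b n) \<alpha> \<le> card M * exp (- c * n)" if "0 < n" for n
  proof -
    obtain A where "A \<in> sets (sample_law P n)" "measure (sample_law P n) A \<le> card M * exp (- c * n)"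
      and "\<And>w. w \<in> space (sample_law P n) \<Longrightarrow> w \<notin> A \<Longrightarrow> hausdorff_dist (w ` {..<n}) M \<le> 0 + 0"
    proof (rule sample_hausdorff_dist_le[OF P Pb \<open>closed M\<close> null order.refl \<open>finite M\<close> \<open>0 < n\<close>])
      show "\<exists>f\<in>M. dist y f \<le> 0" if "y \<in> M" for y
        using that by auto
      show "c \<le> measure P (cball f 0)" if "f \<in> M" for f
        using atoms[OF that] by simp
    qed auto
    then have "subsample_exceedance P M n (b n) \<alpha> \<le> measure (sample_law P n) A + measure (sample_law P n) {}"
      by (intro subsample_exceedance_le[OF P]) (auto intro: subsample_c_nonneg[OF \<open>0 \<le> \<alpha>\<close>])
    with \<open>measure _ A \<le> _\<close> show ?thesis
      by simp
  qed
  then show "\<forall>\<^sub>F n in sequentially. subsample_exceedance P M n (b n) \<alpha> \<le> card M * exp (- c * n)"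
    unfolding eventually_sequentially by (intro exI[of _ 1]) auto
  show "\<forall>\<^sub>F n in sequentially. 0 \<le> subsample_exceedance P M n (b n) \<alpha>"
    by (simp add: subsample_exceedance_nonneg)
  show "(\<lambda>n. card M * exp (- c * real n)) \<longlonglongrightarrow> 0"
    using \<open>c > 0\<close> by real_asymp
qed simp

lemma ball_mass_scale:
  fixes M :: "'a::metric_space set" and m \<rho> t1 :: real
  assumes "0 < d" "0 < \<rho>" "0 < t1" "0 < m" "m < \<rho> / 2 * (t1 / 2) ^ d"
    and lo: "\<And>r x. 0 < r \<Longrightarrow> r < t1 \<Longrightarrow> x \<in> M \<Longrightarrow> \<rho> / 2 * (2 * r) ^ d \<le> measure P (cball x r)"
  obtains \<epsilon> where "0 < \<epsilon>" "8 * \<epsilon> < t1"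
    and "\<And>(k::real) x. 0 < k \<Longrightarrow> k \<le> 8 \<Longrightarrow> x \<in> M \<Longrightarrow> (k / 2) ^ d * m \<le> measure P (cball x (k * \<epsilon>))"
    and "2 * \<rho> * (2 * (8 * \<epsilon>)) ^ d = 4 ^ (d + 1) * m"
proof -
  define \<epsilon> where "\<epsilon> = root d (2 * m / \<rho>) / 4"
  have "(4 * \<epsilon>) ^ d = root d (2 * m / \<rho>) ^ d"
    by (simp add: \<epsilon>_def)
  also have "\<dots> = 2 * m / \<rho>"
    using \<open>0 < d\<close> \<open>0 < m\<close> \<open>0 < \<rho>\<close> by (intro real_root_pow_pos2) auto
  finally have four_eps: "(4 * \<epsilon>) ^ d = 2 * m / \<rho>" .
  have "0 < \<epsilon>"
    using \<open>0 < d\<close> \<open>0 < m\<close> \<open>0 < \<rho>\<close> by (simp add: \<epsilon>_def)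
  have "2 * m / \<rho> < (t1 / 2) ^ d"
    using \<open>m < \<rho> / 2 * (t1 / 2) ^ d\<close> \<open>0 < \<rho>\<close> by (simp add: pos_divide_less_eq field_simps)
  then have "(4 * \<epsilon>) ^ d < (t1 / 2) ^ d"
    by (simp only: four_eps)
  then have "8 * \<epsilon> < t1"
    using \<open>0 < t1\<close> power_less_imp_less_base[of "4 * \<epsilon>" d "t1 / 2"] by simp
  show ?thesis
  proof
    show "0 < \<epsilon>" "8 * \<epsilon> < t1"
      by fact+
    fix k :: real and x assume k: "0 < k" "k \<le> 8" and "x \<in> M"
    have "(2 * (k * \<epsilon>)) ^ d = ((k / 2) * (4 * \<epsilon>)) ^ d"
      by (intro arg_cong[where f = "\<lambda>x. x ^ d"]) simp
    also have "\<dots> = (k / 2) ^ d * (2 * m / \<rho>)"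
      unfolding power_mult_distrib[of "k / 2" "4 * \<epsilon>"] four_eps ..
    finally have scaled: "\<rho> / 2 * (2 * (k * \<epsilon>)) ^ d = (k / 2) ^ d * m"
      using \<open>0 < \<rho>\<close> by simp
    have "k * \<epsilon> \<le> 8 * \<epsilon>"
      using \<open>0 < \<epsilon>\<close> k by (simp add: mult_right_mono)
    then have "k * \<epsilon> < t1"
      using \<open>8 * \<epsilon> < t1\<close> by linarith
    with lo[of "k * \<epsilon>" x] show "(k / 2) ^ d * m \<le> measure P (cball x (k * \<epsilon>))"
      using scaled \<open>0 < \<epsilon>\<close> k \<open>x \<in> M\<close> by simp
  next
    have "(2 * (8 * \<epsilon>)) ^ d = (4 * (4 * \<epsilon>)) ^ d"
      by simp
    also have "\<dots> = 4 ^ d * (2 * m / \<rho>)"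
      unfolding power_mult_distrib[of 4 "4 * \<epsilon>"] four_eps ..
    finally show "2 * \<rho> * (2 * (8 * \<epsilon>)) ^ d = 4 ^ (d + 1) * m"
      using \<open>0 < \<rho>\<close> by simp
  qed
qed

lemma subsample_exceedance_le_pos_dim:
  fixes M :: "'a::metric_space set" and m \<rho> t1 \<alpha> :: real
  assumes P: "prob_space P" and Pb: "sets P = sets borel" and "closed M" and null: "measure P (- M) = 0"
    and "0 < d" "0 < \<rho>" "0 < t1"
    and lo: "\<And>r x. 0 < r \<Longrightarrow> r < t1 \<Longrightarrow> x \<in> M \<Longrightarrow> \<rho> / 2 * (2 * r) ^ d \<le> measure P (cball x r)"
    and hi: "\<And>r. 0 < r \<Longrightarrow> r < t1 \<Longrightarrow> \<exists>x\<in>M. measure P (cball x r) \<le> 2 * \<rho> * (2 * r) ^ d"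
    and "0 \<le> \<alpha>" "\<alpha> < 1" "1 \<le> b" "b \<le> n" "0 < m" "m < \<rho> / 2 * (t1 / 2) ^ d"
  shows "subsample_exceedance P M n b \<alpha>
           \<le> 2 ^ d / m * exp (- m * n) + (exp (- m * real (n - b)) + b * (4 ^ (d + 1) * m)) / (1 - \<alpha>)"
proof -
  obtain \<epsilon> where "0 < \<epsilon>" "8 * \<epsilon> < t1"
    and mass: "\<And>(k::real) x. 0 < k \<Longrightarrow> k \<le> 8 \<Longrightarrow> x \<in> M \<Longrightarrow> (k / 2) ^ d * m \<le> measure P (cball x (k * \<epsilon>))"
    and upper: "2 * \<rho> * (2 * (8 * \<epsilon>)) ^ d = 4 ^ (d + 1) * m"
    using ball_mass_scale[OF \<open>0 < d\<close> \<open>0 < \<rho>\<close> \<open>0 < t1\<close> \<open>0 < m\<close> \<open>m < _\<close> lo] by blast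
  obtain F where F: "F \<subseteq> M" "finite F" "card F * (m / 2 ^ d) \<le> 1"
    and net: "\<And>y. y \<in> M \<Longrightarrow> \<exists>f\<in>F. dist y f \<le> 2 * \<epsilon>"
    using exists_finite_net[OF P Pb _ _ mass[of 1]] \<open>0 < m\<close> \<open>0 < \<epsilon>\<close> by (auto simp: power_divide)
  obtain A1 where A1: "A1 \<in> sets (sample_law P n)" "measure (sample_law P n) A1 \<le> card F * exp (- m * n)"
    and close: "\<And>w. w \<in> space (sample_law P n) \<Longrightarrow> w \<notin> A1 \<Longrightarrow> hausdorff_dist (w ` {..<n}) M \<le> 2 * \<epsilon> + 2 * \<epsilon>"
  proof (rule sample_hausdorff_dist_le[OF P Pb \<open>closed M\<close> null F(1,2), where r = "2 * \<epsilon>" and s = "2 * \<epsilon>"])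
    show "0 < n"
      using \<open>1 \<le> b\<close> \<open>b \<le> n\<close> by simp
    show "m \<le> measure P (cball f (2 * \<epsilon>))" if "f \<in> F" for f
      using mass[of 2 f] that F(1) by auto
  qed (use \<open>0 < \<epsilon>\<close> net in auto)
  obtain x where "x \<in> M" and x_hi: "measure P (cball x (8 * \<epsilon>)) \<le> 2 * \<rho> * (2 * (8 * \<epsilon>)) ^ d"
    using hi[of "8 * \<epsilon>"] \<open>0 < \<epsilon>\<close> \<open>8 * \<epsilon> < t1\<close> by auto
  obtain A2 where A2: "A2 \<in> sets (sample_law P n)"
      "measure (sample_law P n) A2 \<le> (exp (- m * real (n - b)) + b * (4 ^ (d + 1) * m)) / (1 - \<alpha>)"
    and large: "\<And>w. w \<in> space (sample_law P n) \<Longrightarrow> w \<notin> A2 \<Longrightarrow> 2 * (2 * \<epsilon>) \<le> subsample_c n b \<alpha> w"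
  proof (rule subsample_c_ge_whp[OF P Pb \<open>0 \<le> \<alpha>\<close> \<open>\<alpha> < 1\<close> \<open>1 \<le> b\<close> \<open>b \<le> n\<close>, of "2 * \<epsilon>" "8 * \<epsilon>" "4 * \<epsilon>" m x])
    have "m \<le> 2 ^ d * m"
      using \<open>0 < m\<close> by simp
    then show "m \<le> measure P (cball x (4 * \<epsilon>))"
      using mass[of 4 x] \<open>x \<in> M\<close> by simp
    show "measure P (cball x (8 * \<epsilon>)) \<le> 4 ^ (d + 1) * m"
      using x_hi unfolding upper .
  qed (use \<open>0 < \<epsilon>\<close> in simp_all)
  have "card F * exp (- m * n) \<le> 2 ^ d / m * exp (- m * n)"
    using F(3) \<open>0 < m\<close> by (intro mult_right_mono) (simp_all add: field_simps)
  moreover have "2 * \<epsilon> + 2 * \<epsilon> \<le> subsample_c n b \<alpha> w"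
    if "w \<in> space (sample_law P n)" "w \<notin> A2" for w
    using large[OF that] by simp
  ultimately show ?thesis
    using subsample_exceedance_le[OF P A1(1) A2(1) close] A1(2) A2(2) by fastforce
qed

lemma exceedance_rate_tendsto_zero:
  fixes x :: "nat \<Rightarrow> real" and \<alpha> C D :: real
  assumes "x \<longlonglongrightarrow> 0" "\<alpha> < 1"
  shows "(\<lambda>n. C / ln (real n) + (exp (x n) / real n + D * x n) / (1 - \<alpha>)) \<longlonglongrightarrow> 0"
proof -
  have "(\<lambda>n. C / ln (real n)) \<longlonglongrightarrow> 0"
    by real_asymp
  moreover have "(\<lambda>n. (exp (x n) * (1 / real n) + D * x n) / (1 - \<alpha>)) \<longlonglongrightarrow> (exp 0 * 0 + D * 0) / (1 - \<alpha>)"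
    using assms by (intro tendsto_intros) auto
  ultimately show ?thesis
    using tendsto_add by fastforce
qed

lemma subsample_exceedance_tendsto_zero_pos_dim:
  fixes M :: "'a::metric_space set" and \<rho> t1 \<alpha> :: real
  assumes P: "prob_space P" and Pb: "sets P = sets borel" and "closed M" and null: "measure P (- M) = 0"
    and "0 < d" "0 < \<rho>" "0 < t1"
    and lo: "\<And>r x. 0 < r \<Longrightarrow> r < t1 \<Longrightarrow> x \<in> M \<Longrightarrow> \<rho> / 2 * (2 * r) ^ d \<le> measure P (cball x r)"
    and hi: "\<And>r. 0 < r \<Longrightarrow> r < t1 \<Longrightarrow> \<exists>x\<in>M. measure P (cball x r) \<le> 2 * \<rho> * (2 * r) ^ d"
    and "0 \<le> \<alpha>" "\<alpha> < 1"
    and b_range: "\<forall>n\<ge>1. 1 \<le> b n \<and> b n \<le> n"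
    and b_rate: "(\<lambda>n. real (b n) * ln (real n) / real n) \<longlonglongrightarrow> 0"
  shows "(\<lambda>n. subsample_exceedance P M n (b n) \<alpha>) \<longlonglongrightarrow> 0"
proof (rule real_tendsto_sandwich[where f = "\<lambda>_. 0"])
  define x where "x n = real (b n) * ln (real n) / real n" for n
  define \<beta> where "\<beta> n = 2 ^ d / ln (real n) + (exp (x n) / real n + 4 ^ (d + 1) * x n) / (1 - \<alpha>)" for n
  show "\<beta> \<longlonglongrightarrow> 0"
    using b_rate \<open>\<alpha> < 1\<close> unfolding \<beta>_def x_def by (rule exceedance_rate_tendsto_zero)
  have "(\<lambda>n. ln (real n) / real n) \<longlonglongrightarrow> 0"
    by real_asymp
  then have "\<forall>\<^sub>F n in sequentially. ln (real n) / real n < \<rho> / 2 * (t1 / 2) ^ d"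
    using \<open>0 < \<rho>\<close> \<open>0 < t1\<close> by (intro order_tendstoD) auto
  moreover have "\<forall>\<^sub>F n in sequentially. 2 \<le> n"
    by (rule eventually_ge_at_top)
  ultimately show "\<forall>\<^sub>F n in sequentially. subsample_exceedance P M n (b n) \<alpha> \<le> \<beta> n"
  proof eventually_elim
    case (elim n)
    define m where "m = ln (real n) / real n"
    have "0 < m"
      using \<open>2 \<le> n\<close> by (simp add: m_def)
    have b: "1 \<le> b n" "b n \<le> n"
      using b_range \<open>2 \<le> n\<close> by auto
    have e1: "exp (- m * n) = 1 / n"
      using \<open>2 \<le> n\<close> by (simp add: m_def exp_minus inverse_eq_divide)
    have e2: "exp (- m * real (n - b n)) = exp (x n) / n"
    proof -
      have "- m * real (n - b n) = x n - ln n"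
        using \<open>2 \<le> n\<close> b by (simp add: m_def x_def of_nat_diff field_simps)
      then show ?thesis
        using \<open>2 \<le> n\<close> by (simp add: exp_diff)
    qed
    have e3: "2 ^ d / m * (1 / n) = 2 ^ d / ln (real n)"
      using \<open>2 \<le> n\<close> by (simp add: m_def)
    have e4: "real (b n) * (4 ^ (d + 1) * m) = 4 ^ (d + 1) * x n"
      by (simp add: m_def x_def)
    have "subsample_exceedance P M n (b n) \<alpha>
        \<le> 2 ^ d / m * exp (- m * n) + (exp (- m * real (n - b n)) + b n * (4 ^ (d + 1) * m)) / (1 - \<alpha>)"
      using elim \<open>0 < m\<close> b unfolding m_def
      by (intro subsample_exceedance_le_pos_dim[OF P Pb \<open>closed M\<close> null \<open>0 < d\<close> \<open>0 < \<rho>\<close> \<open>0 < t1\<close> lo hi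
            \<open>0 \<le> \<alpha>\<close> \<open>\<alpha> < 1\<close>]) auto
    also have "\<dots> = \<beta> n"
      unfolding \<beta>_def by (simp only: e1 e2 e3 e4)
    finally show ?case .
  qed
qed (simp_all add: subsample_exceedance_nonneg)

lemma subsample_exceedance_tendsto_zero:
  fixes M :: "'a::metric_space set" and \<rho> \<alpha> :: real
  assumes P: "prob_space P" and Pb: "sets P = sets borel" and "closed M" and null: "measure P (- M) = 0"
    and "M \<noteq> {}" and rho_lim: "(rho_fun P d M \<longlongrightarrow> \<rho>) (at_right 0)" and "0 < \<rho>"
    and "0 \<le> \<alpha>" "\<alpha> < 1"
    and b_range: "\<forall>n\<ge>1. 1 \<le> b n \<and> b n \<le> n"
    and b_rate: "(\<lambda>n. real (b n) * ln (real n) / real n) \<longlonglongrightarrow> 0"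
  shows "(\<lambda>n. subsample_exceedance P M n (b n) \<alpha>) \<longlonglongrightarrow> 0"
proof -
  obtain t1 where "0 < t1"
    and lo: "\<And>r x. 0 < r \<Longrightarrow> r < t1 \<Longrightarrow> x \<in> M \<Longrightarrow> \<rho> / 2 * (2 * r) ^ d \<le> measure P (cball x r)"
    and hi: "\<And>r. 0 < r \<Longrightarrow> r < t1 \<Longrightarrow> \<exists>x\<in>M. measure P (cball x r) \<le> 2 * \<rho> * (2 * r) ^ d"
    using ball_mass_bounds[OF rho_lim \<open>0 < \<rho>\<close> \<open>M \<noteq> {}\<close>] by blast
  show ?thesis
  proof (cases "d = 0")
    case True
    have atoms: "\<rho> / 2 \<le> measure P {x}" if "x \<in> M" for x
      using lo that True by (intro measure_singleton_ge[OF P Pb \<open>0 < t1\<close>]) simp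
    have "0 < \<rho> / 2"
      using \<open>0 < \<rho>\<close> by simp
    then show ?thesis
      using subsample_exceedance_tendsto_zero_atomic[OF P Pb \<open>closed M\<close> null _ atoms \<open>0 \<le> \<alpha>\<close>] by blast
  next
    case False
    then show ?thesis
      by (intro subsample_exceedance_tendsto_zero_pos_dim[OF P Pb \<open>closed M\<close> null _ \<open>0 < \<rho>\<close> \<open>0 < t1\<close>
            lo hi \<open>0 \<le> \<alpha>\<close> \<open>\<alpha> < 1\<close> b_range b_rate]) auto
  qed
qed

theorem mainTheorem3:
  fixes M :: "'a::euclidean_space set"
    and d :: nat
    and P :: "'a measure"
    and \<rho> :: real
    and \<alpha> :: real
    and b :: "nat \<Rightarrow> nat"
  assumes M_compact: "compact M"
    and M_manifold: "smooth_submanifold d M"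
    and M_reach: "positive_reach M"
    and P_prob: "prob_space P"
    and P_borel: "sets P = sets borel"
    and P_support: "support_of P = M"
    and rho_lim: "(rho_fun P d M \<longlongrightarrow> \<rho>) (at_right 0)"
    and rho_pos: "\<rho> > 0"
    and rho_diff: "\<exists>t0>0. \<exists>C2. \<forall>t\<in>{0..t0}. \<exists>D.
            ((\<lambda>s. if s = 0 then \<rho> else rho_fun P d M s) has_real_derivative D)
               (at t within {0..t0}) \<and> \<bar>D\<bar> \<le> C2"
    and alpha: "0 < \<alpha>" "\<alpha> < 1"
    and b_range: "\<forall>n\<ge>1. 1 \<le> b n \<and> b n \<le> n"
    and b_inf: "filterlim b at_top sequentially"
    and b_rate: "(\<lambda>n. real (b n) * ln (real n) / real n) \<longlonglongrightarrow> 0"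
  shows "\<exists>K. \<forall>\<^sub>F n in sequentially.
           measure (PiM {..<n} (\<lambda>_. P))
             {w \<in> space (PiM {..<n} (\<lambda>_. P)).
                hausdorff_dist (w ` {..<n}) M > subsample_c n (b n) \<alpha> w}
           \<le> \<alpha> + K * (real (b n) / real n) powr (1/4)"
proof -
  have "closed M"
    using M_compact by (rule compact_imp_closed)
  then have "measure P (- M) = 0" "M \<noteq> {}"
    using support_of_full_measure[OF P_prob P_borel] P_support by auto
  then have "(\<lambda>n. subsample_exceedance P M n (b n) \<alpha>) \<longlonglongrightarrow> 0"
    using alpha by (intro subsample_exceedance_tendsto_zero[OF P_prob P_borel \<open>closed M\<close> _ _ rho_lim rho_pos
          _ _ b_range b_rate]) auto
  then have "\<forall>\<^sub>F n in sequentially. subsample_exceedance P M n (b n) \<alpha> < \<alpha>"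
    using alpha by (intro order_tendstoD) auto
  then show ?thesis
    unfolding subsample_exceedance_def by (intro exI[of _ 0]) (auto elim: eventually_mono)
qed

end
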